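(* Let $d\ge1$, let $D\subset\mathbb{R}^d$ be Lebesgue measurable, let $f:D\to\mathbb{R}$ be bounded, let $r>0$ and let $0<\alpha\le 1$. Then $$|osc_r f|_{\alpha;gH}\le 2\Big(\sup_D f-\inf_D f\Big)\,\mu(Conv(D))\left(\frac{2d+1}{r}\right)^{\alpha},$$ where $Conv(D)$ is the convex hull of $D$.
   Context: $B_r(x):=\{y\in\mathbb{R}^d: |y-x|<r\}$ is the open Euclidean ball. For a function $g:D\to\mathbb{R}$ and $\rho>0$, the $\rho$-oscillation is $(osc_\rho g)(x):=\sup_{y\in B_\rho(x)\cap D} g(y)-\inf_{y\in B_\rho(x)\cap D} g(y)$ for $x\in D$ (a Lebesgue measurable function $D\to[0,\infty]$). Fix a constant $c>0$ and let $\mu=c\cdot Leb$, where $Leb$ is Lebesgue measure on $\mathbb{R}^d$. For $0<\alpha\le1$, the generalized $\alpha$-Hölder seminorm of $g:D\to\mathbb{R}$ is $$|g|_{\alpha;gH}:=\sup_{\rho>0}\frac{1}{\rho^{\alpha}}\int_D (osc_\rho g)(x)\,\mathrm{d}\mu(x).$$ In the claim this is applied to $g=osc_r f$ (which is real-valued since $f$ is bounded). *)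

theory Defs
  imports "HOL-Analysis.Analysis"
begin

definition osc :: "real \<Rightarrow> ('a::euclidean_space) set \<Rightarrow> ('a \<Rightarrow> real) \<Rightarrow> 'a \<Rightarrow> real" where
  "osc \<rho> D g x = Sup (g ` (ball x \<rho> \<inter> D)) - Inf (g ` (ball x \<rho> \<inter> D))"

text \<open>Generalized alpha-Hoelder seminorm w.r.t. mu = c * Lebesgue measure.\<close>
definition gH_seminorm :: "real \<Rightarrow> real \<Rightarrow> ('a::euclidean_space) set \<Rightarrow> ('a \<Rightarrow> real) \<Rightarrow> ennreal" where
  "gH_seminorm c \<alpha> D g =
     (SUP \<rho>\<in>{0<..}. ennreal (1 / \<rho> powr \<alpha>) *
        (ennreal c * (\<integral>\<^sup>+ x\<in>D. ennreal (osc \<rho> D g x) \<partial>lebesgue)))"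

end

theory Submission
  imports Defs
begin

text \<open>
  If \<open>|y - x| < \<rho>\<close> then \<open>B(x, r - \<rho>) \<subseteq> B(y, r) \<subseteq> B(x, r + \<rho>)\<close>, so
  \<open>osc \<rho> D (osc r D f) x\<close> is bounded by how much \<open>sup f\<close> and \<open>sup (-f)\<close> grow from the
  \<open>(r - \<rho>)\<close>-ball to the \<open>(r + \<rho>)\<close>-ball around \<open>x\<close>. Slicing \<open>f\<close> into \<open>N\<close> levels (layer cake),
  the integral of that growth over \<open>D\<close> is at most \<open>sup f - inf f\<close> times the largest measure of a
  shell \<open>D \<inter> (U(r + \<rho>, C) - U(r - \<rho>, C))\<close>, up to an error of order \<open>1 / N\<close>; here \<open>U(s, C)\<close> is the
  union of the \<open>s\<close>-balls centred in a superlevel set \<open>C \<subseteq> D\<close>. Contracting each Voronoi cell of \<open>C\<close>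
  inside the convex hull \<open>K\<close> of \<open>D\<close> towards its centre by \<open>\<mu> = (r - \<rho>) / (r + \<rho>)\<close> gives
  \<open>|K \<inter> U(r - \<rho>, C)| \<ge> \<mu>^d |K \<inter> U(r + \<rho>, C)|\<close>, so the shell has measure at most
  \<open>(1 - \<mu>^d) |K| \<le> (2 d \<rho> / r) |K|\<close>. For \<open>\<rho> \<ge> r / (2 d + 1)\<close> the trivial bound
  \<open>osc \<le> sup f - inf f\<close> suffices.
\<close>

lemma open_imp_sets_lebesgue: "open S \<Longrightarrow> (S::'a::euclidean_space set) \<in> sets lebesgue"
  using borel_open by auto

lemma convex_imp_sets_lebesgue:
  fixes K :: "'a::euclidean_space set"
  assumes "convex K"
  shows "K \<in> sets lebesgue"
proof -
  have "K \<inter> cball 0 (real n) \<in> sets lebesgue" for n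
    using measurable_convex[of "K \<inter> cball 0 (real n)"] assms
    by (auto intro: convex_Int bounded_Int)
  then have "(\<Union>n. K \<inter> cball 0 (real n)) \<in> sets lebesgue"
    by (intro sets.countable_UN) auto
  moreover have "K = (\<Union>n. K \<inter> cball 0 (real n))"
    using real_arch_simple by (auto simp: dist_norm)
  ultimately show ?thesis
    by simp
qed

section \<open>Shrinking unions of balls inside a convex set\<close>

lemma dist_power2_diff_contraction:
  fixes a b x :: "'a::real_inner"
  assumes "\<mu> \<le> 1"
  shows "\<mu> * ((dist x b)\<^sup>2 - (dist x a)\<^sup>2)
         \<le> (dist (a + \<mu> *\<^sub>R (x - a)) b)\<^sup>2 - (dist (a + \<mu> *\<^sub>R (x - a)) a)\<^sup>2"
proof -
  define u where "u = x - a"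
  define w where "w = a - b"
  have xb: "x - b = w + u" and yb: "a + \<mu> *\<^sub>R (x - a) - b = w + \<mu> *\<^sub>R u"
    and ya: "a + \<mu> *\<^sub>R (x - a) - a = \<mu> *\<^sub>R u"
    by (simp_all add: u_def w_def)
  have "(dist x b)\<^sup>2 = inner w w + 2 * inner w u + inner u u"
    unfolding dist_norm power2_norm_eq_inner xb
    by (simp add: inner_add_left inner_add_right inner_commute[of u w])
  moreover have "(dist x a)\<^sup>2 = inner u u"
    unfolding dist_norm power2_norm_eq_inner u_def by simp
  moreover have "(dist (a + \<mu> *\<^sub>R (x - a)) b)\<^sup>2 = inner w w + 2 * \<mu> * inner w u + \<mu> * \<mu> * inner u u"
    unfolding dist_norm power2_norm_eq_inner yb
    by (simp add: inner_add_left inner_add_right inner_commute[of u w] algebra_simps)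
  moreover have "(dist (a + \<mu> *\<^sub>R (x - a)) a)\<^sup>2 = \<mu> * \<mu> * inner u u"
    unfolding dist_norm power2_norm_eq_inner ya by simp
  moreover have "\<mu> * inner w w \<le> inner w w"
    using assms mult_right_mono[of \<mu> 1 "inner w w"] by simp
  ultimately show ?thesis
    by (simp add: algebra_simps)
qed

lemma dist_le_after_contraction:
  fixes a b x :: "'a::real_inner"
  assumes "0 \<le> \<mu>" "\<mu> \<le> 1" "dist x a \<le> dist x b"
  shows "dist (a + \<mu> *\<^sub>R (x - a)) a \<le> dist (a + \<mu> *\<^sub>R (x - a)) b"
proof -
  have "(dist x a)\<^sup>2 \<le> (dist x b)\<^sup>2"
    using assms(3) by (simp add: power_mono)
  then have "0 \<le> \<mu> * ((dist x b)\<^sup>2 - (dist x a)\<^sup>2)"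
    using assms(1) by simp
  then have "(dist (a + \<mu> *\<^sub>R (x - a)) a)\<^sup>2 \<le> (dist (a + \<mu> *\<^sub>R (x - a)) b)\<^sup>2"
    using dist_power2_diff_contraction[OF assms(2), of x b a] by linarith
  then show ?thesis
    by (rule power2_le_imp_le) simp
qed

lemma dist_less_after_contraction:
  fixes a b x :: "'a::real_inner"
  assumes "0 < \<mu>" "\<mu> \<le> 1" "dist x a < dist x b"
  shows "dist (a + \<mu> *\<^sub>R (x - a)) a < dist (a + \<mu> *\<^sub>R (x - a)) b"
proof -
  have "(dist x a)\<^sup>2 < (dist x b)\<^sup>2"
    using assms(3) by (simp add: power_strict_mono)
  then have "0 < \<mu> * ((dist x b)\<^sup>2 - (dist x a)\<^sup>2)"
    using assms(1) by simp
  then have "(dist (a + \<mu> *\<^sub>R (x - a)) a)\<^sup>2 < (dist (a + \<mu> *\<^sub>R (x - a)) b)\<^sup>2"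
    using dist_power2_diff_contraction[OF assms(2), of x b a] by linarith
  then show ?thesis
    by (rule power2_less_imp_less) simp
qed

text \<open>Ties are broken towards the smallest index, so the cells of \<open>e 0, \<dots>, e (n - 1)\<close> are disjoint.\<close>

definition voronoi_cell :: "(nat \<Rightarrow> 'a::metric_space) \<Rightarrow> nat \<Rightarrow> nat \<Rightarrow> 'a set" where
  "voronoi_cell e n i =
     {x. \<forall>j<n. dist x (e i) \<le> dist x (e j) \<and> (j < i \<longrightarrow> dist x (e i) < dist x (e j))}"

lemma voronoi_cell_sets_lebesgue:
  fixes e :: "nat \<Rightarrow> 'a::euclidean_space"
  shows "voronoi_cell e n i \<in> sets lebesgue"
proof -
  have "voronoi_cell e n i = (\<Inter>j<n. {x. dist x (e i) \<le> dist x (e j)})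
      \<inter> (\<Inter>j\<in>{..<n} \<inter> {..<i}. {x. dist x (e i) < dist x (e j)})"
    unfolding voronoi_cell_def by auto
  moreover have "closed (\<Inter>j<n. {x. dist x (e i) \<le> dist x (e j)})"
    by (intro closed_INT ballI closed_Collect_le continuous_intros)
  moreover have "open (\<Inter>j\<in>{..<n} \<inter> {..<i}. {x. dist x (e i) < dist x (e j)})"
    by (intro open_INT finite_Int ballI open_Collect_less continuous_intros) auto
  ultimately show ?thesis
    using borel_closed borel_open by auto
qed

lemma disjoint_family_voronoi_cell: "disjoint_family_on (voronoi_cell e n) {..<n}"
  unfolding disjoint_family_on_def voronoi_cell_def
proof (intro ballI impI)
  fix i j assume "i \<in> {..<n}" "j \<in> {..<n}" "i \<noteq> j"
  then show "{x. \<forall>k<n. dist x (e i) \<le> dist x (e k) \<and> (k < i \<longrightarrow> dist x (e i) < dist x (e k))}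
      \<inter> {x. \<forall>k<n. dist x (e j) \<le> dist x (e k) \<and> (k < j \<longrightarrow> dist x (e j) < dist x (e k))} = {}"
    by (cases i j rule: linorder_cases) (auto simp: not_le[symmetric])
qed

lemma ex_voronoi_cell_nearer:
  assumes "j < n"
  shows "\<exists>i<n. x \<in> voronoi_cell e n i \<and> dist x (e i) \<le> dist x (e j)"
proof -
  let ?nearest = "\<lambda>i. i < n \<and> (\<forall>k<n. dist x (e i) \<le> dist x (e k))"
  have "?nearest (arg_min_on (\<lambda>k. dist x (e k)) {..<n})"
    using arg_min_if_finite[of "{..<n}" "\<lambda>k. dist x (e k)"] assms by (auto simp: not_less)
  then have i: "?nearest (LEAST i. ?nearest i)"
    by (rule LeastI)
  have "x \<in> voronoi_cell e n (LEAST i. ?nearest i)"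
    unfolding voronoi_cell_def
  proof (intro CollectI allI impI conjI)
    fix k assume "k < n"
    then show "dist x (e (LEAST i. ?nearest i)) \<le> dist x (e k)"
      using i by blast
    assume "k < (LEAST i. ?nearest i)"
    then have "\<not> ?nearest k"
      by (rule not_less_Least)
    moreover have "dist x (e (LEAST i. ?nearest i)) \<le> dist x (e k)"
      using i \<open>k < n\<close> by blast
    ultimately show "dist x (e (LEAST i. ?nearest i)) < dist x (e k)"
      using i \<open>k < n\<close> by force
  qed
  then show ?thesis
    using i assms by blast
qed

lemma contraction_mem_voronoi_cell:
  fixes e :: "nat \<Rightarrow> 'a::real_inner"
  assumes "x \<in> voronoi_cell e n i" "0 < \<mu>" "\<mu> \<le> 1"
  shows "e i + \<mu> *\<^sub>R (x - e i) \<in> voronoi_cell e n i"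
  using assms dist_le_after_contraction[of \<mu> x "e i"] dist_less_after_contraction[of \<mu> x "e i"]
  by (simp add: voronoi_cell_def dist_commute)

lemma emeasure_convex_Int_finite_balls_shrink:
  fixes e :: "nat \<Rightarrow> 'a::euclidean_space"
  assumes K: "convex K" "K \<in> sets lebesgue" and e: "\<And>i. i < n \<Longrightarrow> e i \<in> K"
    and \<mu>: "0 < \<mu>" "\<mu> \<le> 1"
  shows "ennreal (\<mu> ^ DIM('a)) * emeasure lebesgue (K \<inter> (\<Union>i<n. ball (e i) R))
         \<le> emeasure lebesgue (K \<inter> (\<Union>i<n. ball (e i) (\<mu> * R)))"
proof -
  define A where "A s i = K \<inter> voronoi_cell e n i \<inter> ball (e i) s" for s i
  have A_sets: "A s i \<in> sets lebesgue" for s i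
    unfolding A_def using K(2) voronoi_cell_sets_lebesgue open_imp_sets_lebesgue[OF open_ball] by blast
  have emeasure_A: "emeasure lebesgue (K \<inter> (\<Union>i<n. ball (e i) s)) = (\<Sum>i<n. emeasure lebesgue (A s i))" for s
  proof -
    have "disjoint_family_on (A s) {..<n}"
      using disjoint_family_voronoi_cell[of e n] unfolding disjoint_family_on_def A_def by blast
    then have "emeasure lebesgue (\<Union>i<n. A s i) = (\<Sum>i<n. emeasure lebesgue (A s i))"
      using A_sets by (intro sum_emeasure[symmetric]) auto
    moreover have "K \<inter> (\<Union>i<n. ball (e i) s) = (\<Union>i<n. A s i)"
      unfolding A_def using ex_voronoi_cell_nearer[of _ n _ e]
      by (fastforce simp: dist_commute)
    ultimately show ?thesis
      by simp
  qed
  define h where "h i x = \<mu> *\<^sub>R x + (1 - \<mu>) *\<^sub>R e i" for i x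
  have h_A: "h i ` A R i \<subseteq> A (\<mu> * R) i" if "i < n" for i
  proof
    fix y assume "y \<in> h i ` A R i"
    then obtain x where x: "x \<in> A R i" and y: "y = e i + \<mu> *\<^sub>R (x - e i)"
      unfolding h_def by (auto simp: algebra_simps)
    have "y \<in> K"
      using convexD[OF K(1) e[OF that], of x "1 - \<mu>" \<mu>] x \<mu> unfolding y A_def
      by (simp add: algebra_simps)
    moreover have "y \<in> voronoi_cell e n i"
      using x \<mu> unfolding y A_def by (intro contraction_mem_voronoi_cell) auto
    moreover have "dist (e i) y < \<mu> * R"
      using x \<mu> unfolding y A_def by (simp add: dist_norm norm_minus_commute)
    ultimately show "y \<in> A (\<mu> * R) i"
      unfolding A_def by simp
  qed
  have "ennreal (\<mu> ^ DIM('a)) * emeasure lebesgue (K \<inter> (\<Union>i<n. ball (e i) R))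
      = (\<Sum>i<n. emeasure lebesgue (h i ` A R i))"
    using emeasure_lebesgue_affine[of \<mu> _ "A R _"] \<mu>
    by (simp add: emeasure_A sum_distrib_left h_def)
  also have "\<dots> \<le> (\<Sum>i<n. emeasure lebesgue (A (\<mu> * R) i))"
    by (intro sum_mono emeasure_mono h_A A_sets) auto
  also have "\<dots> = emeasure lebesgue (K \<inter> (\<Union>i<n. ball (e i) (\<mu> * R)))"
    by (rule emeasure_A[symmetric])
  finally show ?thesis .
qed

lemma emeasure_convex_Int_balls_shrink:
  fixes C K :: "'a::euclidean_space set"
  assumes K: "convex K" "K \<in> sets lebesgue" and "C \<subseteq> K" and \<mu>: "0 < \<mu>" "\<mu> \<le> 1"
  shows "ennreal (\<mu> ^ DIM('a)) * emeasure lebesgue (K \<inter> (\<Union>c\<in>C. ball c R))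
         \<le> emeasure lebesgue (K \<inter> (\<Union>c\<in>C. ball c (\<mu> * R)))"
proof -
  obtain F where F: "F \<subseteq> (\<lambda>c. ball c R) ` C" "countable F" "\<Union>F = (\<Union>c\<in>C. ball c R)"
    using Lindelof[of "(\<lambda>c. ball c R) ` C"] by auto
  then obtain C' where C': "countable C'" "C' \<subseteq> C" "F = (\<lambda>c. ball c R) ` C'"
    using countable_subset_image[of F "\<lambda>c. ball c R" C] by auto
  have C'_covers: "(\<Union>c\<in>C'. ball c R) = (\<Union>c\<in>C. ball c R)"
    using F C' by auto
  show ?thesis
  proof (cases "C' = {}")
    case True
    then have "(\<Union>c\<in>C. ball c R) = {}"
      using C'_covers by simp
    then show ?thesis
      by (metis Int_empty_right emeasure_empty mult_zero_right zero_le)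
  next
    case False
    define g where "g = from_nat_into C'"
    have range_g: "range g = C'"
      unfolding g_def using False C' by simp
    define B where "B s n = K \<inter> (\<Union>i<n. ball (g i) s)" for s n
    have B_sets: "B s n \<in> sets lebesgue" for s n
      unfolding B_def using K(2) open_imp_sets_lebesgue[of "\<Union>i<n. ball (g i) s"] by auto
    have "emeasure lebesgue (K \<inter> (\<Union>c\<in>C. ball c R)) = emeasure lebesgue (\<Union>n. B R n)"
      unfolding B_def C'_covers[symmetric] range_g[symmetric] by (rule arg_cong) auto
    also have "\<dots> = (SUP n. emeasure lebesgue (B R n))"
      using B_sets by (intro SUP_emeasure_incseq[symmetric] incseq_SucI) (auto simp: B_def intro: less_SucI)
    finally have "ennreal (\<mu> ^ DIM('a)) * emeasure lebesgue (K \<inter> (\<Union>c\<in>C. ball c R))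
        = (SUP n. ennreal (\<mu> ^ DIM('a)) * emeasure lebesgue (B R n))"
      by (simp add: SUP_mult_left_ennreal)
    also have "\<dots> \<le> (SUP n. emeasure lebesgue (B (\<mu> * R) n))"
      unfolding B_def using range_g C'(2) assms(3)
      by (intro SUP_mono' emeasure_convex_Int_finite_balls_shrink[OF K _ \<mu>]) auto
    also have "\<dots> \<le> emeasure lebesgue (K \<inter> (\<Union>c\<in>C. ball c (\<mu> * R)))"
      unfolding B_def using range_g C'(2)
      by (intro SUP_least emeasure_mono sets.Int[OF K(2)] open_imp_sets_lebesgue) auto
    finally show ?thesis .
  qed
qed

lemma measure_convex_Int_balls_shell_le:
  fixes C K :: "'a::euclidean_space set"
  assumes K: "convex K" "K \<in> sets lebesgue" "emeasure lebesgue K < \<infinity>" and "C \<subseteq> K"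
    and s: "0 < s1" "s1 \<le> s2"
  shows "measure lebesgue (K \<inter> ((\<Union>c\<in>C. ball c s2) - (\<Union>c\<in>C. ball c s1)))
         \<le> (1 - (s1 / s2) ^ DIM('a)) * measure lebesgue K"
proof -
  define \<mu> where "\<mu> = s1 / s2"
  have \<mu>: "0 < \<mu>" "\<mu> \<le> 1"
    unfolding \<mu>_def using s by auto
  define P where "P = K \<inter> (\<Union>c\<in>C. ball c s2)"
  define Q where "Q = K \<inter> (\<Union>c\<in>C. ball c s1)"
  have K_fin: "K \<in> fmeasurable lebesgue"
    using K by (simp add: fmeasurable_def)
  have "K \<inter> (\<Union>c\<in>C. ball c s) \<in> sets lebesgue" for s
    by (intro sets.Int[OF K(2)] open_imp_sets_lebesgue) auto
  then have P_fin: "P \<in> fmeasurable lebesgue" and Q_fin: "Q \<in> fmeasurable lebesgue"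
    unfolding P_def Q_def by (auto intro!: fmeasurableI2[OF K_fin])
  have "ennreal (\<mu> ^ DIM('a)) * emeasure lebesgue P \<le> emeasure lebesgue Q"
    using emeasure_convex_Int_balls_shrink[OF K(1,2) assms(4) \<mu>, of s2] s
    unfolding P_def Q_def \<mu>_def by simp
  then have "ennreal (\<mu> ^ DIM('a) * measure lebesgue P) \<le> ennreal (measure lebesgue Q)"
    unfolding emeasure_eq_measure2[OF P_fin] emeasure_eq_measure2[OF Q_fin]
    using \<mu> by (simp add: ennreal_mult)
  then have "\<mu> ^ DIM('a) * measure lebesgue P \<le> measure lebesgue Q"
    by (simp add: ennreal_le_iff)
  have "Q \<subseteq> P"
    using s unfolding P_def Q_def by auto
  have "measure lebesgue (K \<inter> ((\<Union>c\<in>C. ball c s2) - (\<Union>c\<in>C. ball c s1))) = measure lebesgue (P - Q)"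
    unfolding P_def Q_def by (rule arg_cong) auto
  also have "\<dots> = measure lebesgue P - measure lebesgue Q"
    using P_fin Q_fin \<open>Q \<subseteq> P\<close> by (intro measure_Diff) (auto simp: fmeasurable_def)
  also have "\<dots> \<le> (1 - \<mu> ^ DIM('a)) * measure lebesgue P"
    using \<open>\<mu> ^ DIM('a) * measure lebesgue P \<le> measure lebesgue Q\<close> by (simp add: algebra_simps)
  also have "\<dots> \<le> (1 - \<mu> ^ DIM('a)) * measure lebesgue K"
    using P_fin K_fin \<mu> unfolding P_def
    by (intro mult_left_mono measure_mono_fmeasurable) (auto simp: power_le_one)
  finally show ?thesis
    unfolding \<mu>_def .
qed

section \<open>Oscillations and a discretised layer-cake formula\<close>

lemma Inf_image_eq_uminus_Sup: "Inf (f ` A) = - Sup ((\<lambda>y. - f y) ` A)" for f :: "'b \<Rightarrow> real"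
  by (simp add: Inf_real_def image_image)

lemma osc_nonneg_le_range:
  fixes f :: "'a::euclidean_space \<Rightarrow> real"
  assumes "bounded (f ` D)" "x \<in> D" "0 < \<rho>"
  shows "0 \<le> osc \<rho> D f x" "osc \<rho> D f x \<le> Sup (f ` D) - Inf (f ` D)"
proof -
  have bdd: "bdd_above (f ` D)" "bdd_below (f ` D)"
    using assms(1) by (auto intro: bounded_imp_bdd_above bounded_imp_bdd_below)
  have fx: "f x \<in> f ` (ball x \<rho> \<inter> D)"
    using assms(2,3) by simp
  have "Inf (f ` (ball x \<rho> \<inter> D)) \<le> f x" "f x \<le> Sup (f ` (ball x \<rho> \<inter> D))"
    using fx bdd by (auto intro!: cInf_lower cSup_upper intro: bdd_above_mono bdd_below_mono)
  moreover have "Sup (f ` (ball x \<rho> \<inter> D)) \<le> Sup (f ` D)" "Inf (f ` D) \<le> Inf (f ` (ball x \<rho> \<inter> D))"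
    using fx bdd by (auto intro!: cSup_subset_mono cInf_superset_mono)
  ultimately show "0 \<le> osc \<rho> D f x" "osc \<rho> D f x \<le> Sup (f ` D) - Inf (f ` D)"
    unfolding osc_def by linarith+
qed

lemma osc_osc_le:
  fixes f :: "'a::euclidean_space \<Rightarrow> real"
  assumes "bounded (f ` D)" and x: "x \<in> D" and \<rho>: "0 < \<rho>" "\<rho> < r"
  shows "osc \<rho> D (osc r D f) x
    \<le> (Sup (f ` (ball x (r + \<rho>) \<inter> D)) - Sup (f ` (ball x (r - \<rho>) \<inter> D)))
      + (Inf (f ` (ball x (r - \<rho>) \<inter> D)) - Inf (f ` (ball x (r + \<rho>) \<inter> D)))"
proof -
  have bdd: "bdd_above (f ` (ball z s \<inter> D))" "bdd_below (f ` (ball z s \<inter> D))" for z s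
    using assms(1) by (auto intro: bounded_imp_bdd_above bounded_imp_bdd_below bdd_above_mono bdd_below_mono)
  define P where "P = Sup (f ` (ball x (r + \<rho>) \<inter> D)) - Inf (f ` (ball x (r + \<rho>) \<inter> D))"
  define Q where "Q = Sup (f ` (ball x (r - \<rho>) \<inter> D)) - Inf (f ` (ball x (r - \<rho>) \<inter> D))"
  have osc_y: "Q \<le> osc r D f y \<and> osc r D f y \<le> P" if y: "y \<in> ball x \<rho> \<inter> D" for y
  proof -
    have inner: "ball x (r - \<rho>) \<inter> D \<subseteq> ball y r \<inter> D" and outer: "ball y r \<inter> D \<subseteq> ball x (r + \<rho>) \<inter> D"
      using y by (auto simp: subset_iff) metric+
    have "x \<in> ball x (r - \<rho>) \<inter> D" "y \<in> ball y r \<inter> D"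
      using x y \<rho> by auto
    then have ne: "f ` (ball x (r - \<rho>) \<inter> D) \<noteq> {}" "f ` (ball y r \<inter> D) \<noteq> {}"
      by blast+
    show ?thesis
      unfolding osc_def P_def Q_def
      using cSup_subset_mono[OF ne(1) bdd(1) image_mono[OF inner]]
        cInf_superset_mono[OF ne(1) bdd(2) image_mono[OF inner]]
        cSup_subset_mono[OF ne(2) bdd(1) image_mono[OF outer]]
        cInf_superset_mono[OF ne(2) bdd(2) image_mono[OF outer]]
      by linarith
  qed
  have "x \<in> ball x \<rho> \<inter> D"
    using x \<rho> by simp
  then have ne: "osc r D f ` (ball x \<rho> \<inter> D) \<noteq> {}"
    by blast
  have "Sup (osc r D f ` (ball x \<rho> \<inter> D)) \<le> P" "Q \<le> Inf (osc r D f ` (ball x \<rho> \<inter> D))"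
    using ne osc_y by (auto intro!: cSup_least cInf_greatest)
  then show ?thesis
    unfolding osc_def[of \<rho>] P_def Q_def by linarith
qed

definition superlevel_nbhd :: "('a::metric_space \<Rightarrow> real) \<Rightarrow> 'a set \<Rightarrow> real \<Rightarrow> real \<Rightarrow> 'a set" where
  "superlevel_nbhd F D t s = (\<Union>c\<in>{y\<in>D. t < F y}. ball c s)"

lemma mem_superlevel_nbhd_iff:
  assumes "bdd_above (F ` D)" "x \<in> D" "0 < s"
  shows "x \<in> superlevel_nbhd F D t s \<longleftrightarrow> t < Sup (F ` (ball x s \<inter> D))"
proof -
  have "F x \<in> F ` (ball x s \<inter> D)" "bdd_above (F ` (ball x s \<inter> D))"
    using assms by (auto intro: bdd_above_mono)
  then show ?thesis
    unfolding superlevel_nbhd_def by (subst less_cSup_iff) (auto simp: dist_commute)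
qed

lemma sum_indicator_less_bounds:
  fixes u :: real
  assumes "0 \<le> u" "u \<le> real N"
  shows "u \<le> (\<Sum>k<N. if real k < u then 1 else 0)" "(\<Sum>k<N. if real k < u then 1 else 0) \<le> u + 1"
proof -
  have "{..<N} \<inter> {k. real k < u} = {..<nat \<lceil>u\<rceil>}"
    using assms by (auto simp: less_ceiling_iff zless_nat_eq_int_zless)
  then have "(\<Sum>k<N. if real k < u then 1 else 0) = real (nat \<lceil>u\<rceil>)"
    by (simp add: sum.If_cases)
  moreover have "real (nat \<lceil>u\<rceil>) = of_int \<lceil>u\<rceil>"
    using assms by simp
  ultimately show "u \<le> (\<Sum>k<N. if real k < u then 1 else 0)" "(\<Sum>k<N. if real k < u then 1 else 0) \<le> u + 1"
    by (simp_all add: le_of_int_ceiling)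
qed

definition level_shell :: "('a::metric_space \<Rightarrow> real) \<Rightarrow> 'a set \<Rightarrow> nat \<Rightarrow> real \<Rightarrow> real \<Rightarrow> nat \<Rightarrow> 'a set" where
  "level_shell F D N s1 s2 k =
     (let t = Inf (F ` D) + real k * (Sup (F ` D) - Inf (F ` D)) / real N
      in superlevel_nbhd F D t s2 - superlevel_nbhd F D t s1)"

text \<open>A discretised layer-cake formula with \<open>N\<close> levels between \<open>Inf F\<close> and \<open>Sup F\<close>: the increase of
  \<open>Sup F\<close> from the \<open>s1\<close>-ball to the \<open>s2\<close>-ball is at most one level step per level crossed, plus one step.\<close>

definition layer_majorant :: "('a::metric_space \<Rightarrow> real) \<Rightarrow> 'a set \<Rightarrow> nat \<Rightarrow> real \<Rightarrow> real \<Rightarrow> 'a \<Rightarrow> real" where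
  "layer_majorant F D N s1 s2 x =
     (Sup (F ` D) - Inf (F ` D)) / real N
       * ((\<Sum>k<N. indicator (D \<inter> level_shell F D N s1 s2 k) x) + indicator D x)"

lemma Sup_ball_diff_le_layer_majorant:
  fixes F :: "'a::metric_space \<Rightarrow> real"
  assumes "bounded (F ` D)" and x: "x \<in> D" and s: "0 < s1" "s1 \<le> s2" and N: "0 < N"
  shows "Sup (F ` (ball x s2 \<inter> D)) - Sup (F ` (ball x s1 \<inter> D)) \<le> layer_majorant F D N s1 s2 x"
proof -
  define m where "m = Inf (F ` D)"
  define \<delta> where "\<delta> = (Sup (F ` D) - m) / real N"
  define S where "S s = Sup (F ` (ball x s \<inter> D))" for s
  have bdd: "bdd_above (F ` D)" "bdd_below (F ` D)"
    using assms(1) by (auto intro: bounded_imp_bdd_above bounded_imp_bdd_below)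
  have S_bounds: "m \<le> S s \<and> S s \<le> Sup (F ` D)" if "0 < s" for s
  proof -
    have "F x \<in> F ` (ball x s \<inter> D)"
      using x that by simp
    then show ?thesis
      unfolding S_def m_def using bdd x
      by (auto intro!: cSup_upper2[of "F x"] cInf_lower2[of "F x"] cSup_subset_mono intro: bdd_above_mono)
  qed
  have "x \<in> ball x s1 \<inter> D"
    using x s by simp
  then have S_mono: "S s1 \<le> S s2"
    unfolding S_def using s bdd by (intro cSup_subset_mono) (blast, auto intro: bdd_above_mono)
  have majorant_x: "layer_majorant F D N s1 s2 x = \<delta> * ((\<Sum>k<N. indicator (level_shell F D N s1 s2 k) x) + 1)"
    unfolding layer_majorant_def \<delta>_def m_def using x by (simp add: indicator_inter_arith)
  show ?thesis
  proof (cases "Sup (F ` D) = m")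
    case True
    then show ?thesis
      using S_bounds[of s1] S_bounds[of s2] s unfolding majorant_x \<delta>_def S_def by simp
  next
    case False
    then have \<delta>: "0 < \<delta>"
      using S_bounds[of s1] s N unfolding \<delta>_def by simp
    define u where "u s = (S s - m) / \<delta>" for s
    have u_bounds: "0 \<le> u s \<and> u s \<le> real N" if "0 < s" for s
      using S_bounds[OF that] \<delta> N unfolding u_def \<delta>_def by (simp add: field_simps)
    have "indicator (level_shell F D N s1 s2 k) x
        = (if real k < u s2 then 1 else 0) - (if real k < u s1 then 1 else (0::real))" for k
    proof -
      have "m + real k * \<delta> < S s \<longleftrightarrow> real k < u s" for s
        unfolding u_def using \<delta> by (simp add: field_simps)
      moreover have "u s1 \<le> u s2"
        unfolding u_def using S_mono \<delta> by (simp add: divide_right_mono)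
      ultimately show ?thesis
        using mem_superlevel_nbhd_iff[OF bdd(1) x] s
        unfolding level_shell_def Let_def S_def \<delta>_def m_def
        by (auto simp: indicator_def mult.commute[of "real k"])
    qed
    then have "(\<Sum>k<N. indicator (level_shell F D N s1 s2 k) x)
        = (\<Sum>k<N. if real k < u s2 then 1 else 0) - (\<Sum>k<N. if real k < u s1 then 1 else (0::real))"
      by (simp add: sum_subtractf)
    then have "u s2 - u s1 - 1 \<le> (\<Sum>k<N. indicator (level_shell F D N s1 s2 k) x)"
      using sum_indicator_less_bounds(1)[of "u s2" N] sum_indicator_less_bounds(2)[of "u s1" N]
        u_bounds[of s1] u_bounds[of s2] s by linarith
    then have "\<delta> * (u s2 - u s1) \<le> \<delta> * ((\<Sum>k<N. indicator (level_shell F D N s1 s2 k) x) + 1)"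
      using \<delta> by (intro mult_left_mono) auto
    moreover have "\<delta> * (u s2 - u s1) = S s2 - S s1"
      unfolding u_def using \<delta> by (simp add: diff_divide_distrib[symmetric])
    ultimately show ?thesis
      unfolding majorant_x S_def by linarith
  qed
qed

lemma layer_majorant_nonneg:
  assumes "Inf (F ` D) \<le> Sup (F ` D)"
  shows "0 \<le> layer_majorant F D N s1 s2 x"
  unfolding layer_majorant_def using assms
  by (intro mult_nonneg_nonneg divide_nonneg_nonneg add_nonneg_nonneg sum_nonneg) auto

lemma level_shell_sets_lebesgue:
  fixes F :: "'a::euclidean_space \<Rightarrow> real"
  shows "level_shell F D N s1 s2 k \<in> sets lebesgue"
  unfolding level_shell_def Let_def superlevel_nbhd_def
  by (intro sets.Diff open_imp_sets_lebesgue) auto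

lemma
  fixes F :: "'a::euclidean_space \<Rightarrow> real"
  assumes D: "D \<in> sets lebesgue" "emeasure lebesgue D < \<infinity>"
  shows integrable_layer_majorant: "integrable lebesgue (layer_majorant F D N s1 s2)"
    and integral_layer_majorant: "integral\<^sup>L lebesgue (layer_majorant F D N s1 s2)
      = (Sup (F ` D) - Inf (F ` D)) / real N
          * ((\<Sum>k<N. measure lebesgue (D \<inter> level_shell F D N s1 s2 k)) + measure lebesgue D)"
proof -
  have shell_sets: "D \<inter> level_shell F D N s1 s2 k \<in> sets lebesgue" for k
    using D(1) level_shell_sets_lebesgue by blast
  have "emeasure lebesgue (D \<inter> level_shell F D N s1 s2 k) \<le> emeasure lebesgue D" for k
    using D(1) by (intro emeasure_mono) auto
  then have shell_fin: "emeasure lebesgue (D \<inter> level_shell F D N s1 s2 k) < \<infinity>" for k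
    using D(2) by (rule le_less_trans)
  have integrable_sum: "integrable lebesgue (\<lambda>x. (\<Sum>k<N. indicator (D \<inter> level_shell F D N s1 s2 k) x :: real))"
    using shell_sets shell_fin by (intro Bochner_Integration.integrable_sum integrable_real_indicator) auto
  have integrable_D: "integrable lebesgue (indicator D :: 'a \<Rightarrow> real)"
    using D by (intro integrable_real_indicator) auto
  show "integrable lebesgue (layer_majorant F D N s1 s2)"
    unfolding layer_majorant_def[abs_def] using integrable_sum integrable_D by simp
  show "integral\<^sup>L lebesgue (layer_majorant F D N s1 s2)
      = (Sup (F ` D) - Inf (F ` D)) / real N
          * ((\<Sum>k<N. measure lebesgue (D \<inter> level_shell F D N s1 s2 k)) + measure lebesgue D)"
    unfolding layer_majorant_def[abs_def] using integrable_sum integrable_D shell_sets shell_fin D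
    by (simp add: Bochner_Integration.integral_sum)
qed

lemma integral_layer_majorant_le:
  fixes F :: "'a::euclidean_space \<Rightarrow> real"
  assumes K: "convex K" "K \<in> sets lebesgue" "emeasure lebesgue K < \<infinity>"
    and D: "D \<subseteq> K" "D \<in> sets lebesgue" "D \<noteq> {}" "bounded (F ` D)"
    and s: "0 < s1" "s1 \<le> s2" and N: "0 < N"
  shows "integral\<^sup>L lebesgue (layer_majorant F D N s1 s2)
    \<le> (Sup (F ` D) - Inf (F ` D)) * ((1 - (s1 / s2) ^ DIM('a)) * measure lebesgue K + measure lebesgue K / real N)"
proof -
  define q where "q = (1 - (s1 / s2) ^ DIM('a)) * measure lebesgue K"
  have K_fin: "K \<in> fmeasurable lebesgue"
    using K by (simp add: fmeasurable_def)
  have D_fin: "emeasure lebesgue D < \<infinity>"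
    using emeasure_mono[OF D(1) K(2)] K(3) by simp
  have "Inf (F ` D) \<le> Sup (F ` D)"
    using D(3,4) by (intro cInf_le_cSup bounded_imp_bdd_above bounded_imp_bdd_below) auto
  then have \<delta>: "0 \<le> (Sup (F ` D) - Inf (F ` D)) / real N"
    by simp
  have "measure lebesgue (D \<inter> level_shell F D N s1 s2 k) \<le> q" for k
  proof -
    have "measure lebesgue (D \<inter> level_shell F D N s1 s2 k) \<le> measure lebesgue (K \<inter> level_shell F D N s1 s2 k)"
      using D(1,2) K(2) level_shell_sets_lebesgue[of F D N s1 s2 k]
      by (intro measure_mono_fmeasurable fmeasurableI2[OF K_fin]) auto
    also have "\<dots> \<le> q"
      unfolding q_def level_shell_def Let_def superlevel_nbhd_def
      using D(1) by (intro measure_convex_Int_balls_shell_le[OF K _ s]) auto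
    finally show ?thesis .
  qed
  then have "(\<Sum>k<N. measure lebesgue (D \<inter> level_shell F D N s1 s2 k)) + measure lebesgue D \<le> N * q + measure lebesgue K"
    using sum_mono[of "{..<N}" "\<lambda>k. measure lebesgue (D \<inter> level_shell F D N s1 s2 k)" "\<lambda>_. q"]
      measure_mono_fmeasurable[OF D(1) D(2) K_fin] by simp
  then have "integral\<^sup>L lebesgue (layer_majorant F D N s1 s2)
      \<le> (Sup (F ` D) - Inf (F ` D)) / real N * (N * q + measure lebesgue K)"
    unfolding integral_layer_majorant[OF D(2) D_fin] using \<delta> by (rule mult_left_mono)
  also have "\<dots> = (Sup (F ` D) - Inf (F ` D)) * (q + measure lebesgue K / real N)"
    using N by (simp add: field_simps)
  finally show ?thesis
    unfolding q_def .
qed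

lemma osc_osc_le_layer_majorants:
  fixes f :: "'a::euclidean_space \<Rightarrow> real"
  assumes "bounded (f ` D)" "x \<in> D" "0 < \<rho>" "\<rho> < r" "0 < N"
  shows "osc \<rho> D (osc r D f) x
    \<le> layer_majorant f D N (r - \<rho>) (r + \<rho>) x + layer_majorant (\<lambda>y. - f y) D N (r - \<rho>) (r + \<rho>) x"
proof -
  have "bounded ((\<lambda>y. - f y) ` D)"
    using assms(1) bounded_uminus by (simp add: image_image)
  then show ?thesis
    using osc_osc_le[OF assms(1-4)] assms
      Sup_ball_diff_le_layer_majorant[of f D x "r - \<rho>" "r + \<rho>" N]
      Sup_ball_diff_le_layer_majorant[of "\<lambda>y. - f y" D x "r - \<rho>" "r + \<rho>" N]
    unfolding Inf_image_eq_uminus_Sup[of f] by simp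
qed

section \<open>The generalised Holder seminorm of the oscillation\<close>

lemma ennreal_le_of_le_add_inverse_nat:
  fixes X :: ennreal and a b :: real
  assumes "0 \<le> a" "0 \<le> b" "\<And>N::nat. 0 < N \<Longrightarrow> X \<le> ennreal (a + b / real N)"
  shows "X \<le> ennreal a"
proof (rule ennreal_le_epsilon)
  fix e :: real assume e: "0 < e"
  obtain N :: nat where N: "b / e < real N"
    using reals_Archimedean2 by blast
  have "0 < N"
    using N assms(2) e by (metis divide_nonneg_pos of_nat_0 neq0_conv not_less)
  then have "b / real N \<le> e"
    using N e by (simp add: field_simps)
  then have "X \<le> ennreal (a + e)"
    using assms(3)[OF \<open>0 < N\<close>] by (meson add_left_mono ennreal_leI order_trans)
  then show "X \<le> ennreal a + ennreal e"
    using assms(1) e by (simp add: ennreal_plus)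
qed

lemma nn_integral_osc_osc_le_shell:
  fixes f :: "'a::euclidean_space \<Rightarrow> real"
  assumes K: "convex K" "K \<in> sets lebesgue" "emeasure lebesgue K < \<infinity>"
    and D: "D \<subseteq> K" "D \<in> sets lebesgue" "D \<noteq> {}" "bounded (f ` D)"
    and \<rho>: "0 < \<rho>" "\<rho> < r"
  shows "(\<integral>\<^sup>+ x\<in>D. ennreal (osc \<rho> D (osc r D f) x) \<partial>lebesgue)
    \<le> ennreal (2 * (Sup (f ` D) - Inf (f ` D)) * ((1 - ((r - \<rho>) / (r + \<rho>)) ^ DIM('a)) * measure lebesgue K))"
proof -
  define M where "M = Sup (f ` D) - Inf (f ` D)"
  define q where "q = (1 - ((r - \<rho>) / (r + \<rho>)) ^ DIM('a)) * measure lebesgue K"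
  define g where "g = (\<lambda>y. - f y)"
  have g: "bounded (g ` D)" "Sup (g ` D) - Inf (g ` D) = M"
    using D(4) bounded_uminus unfolding g_def M_def Inf_image_eq_uminus_Sup[of f]
    by (simp_all add: image_image Inf_image_eq_uminus_Sup)
  have "Inf (f ` D) \<le> Sup (f ` D)"
    using D(3,4) by (intro cInf_le_cSup bounded_imp_bdd_above bounded_imp_bdd_below) auto
  then have M: "0 \<le> M" and "Inf (g ` D) \<le> Sup (g ` D)"
    using g(2) unfolding M_def by simp_all
  have D_fin: "emeasure lebesgue D < \<infinity>"
    using emeasure_mono[OF D(1) K(2)] K(3) by simp
  have q: "0 \<le> q"
    unfolding q_def using \<rho> by (intro mult_nonneg_nonneg) (auto simp: power_le_one)
  show ?thesis
    unfolding M_def[symmetric] q_def[symmetric]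
  proof (rule ennreal_le_of_le_add_inverse_nat)
    show "0 \<le> 2 * M * q" "0 \<le> 2 * M * measure lebesgue K"
      using M q by simp_all
    fix N :: nat assume N: "0 < N"
    let ?h = "\<lambda>x. layer_majorant f D N (r - \<rho>) (r + \<rho>) x + layer_majorant g D N (r - \<rho>) (r + \<rho>) x"
    have "(\<integral>\<^sup>+ x\<in>D. ennreal (osc \<rho> D (osc r D f) x) \<partial>lebesgue) \<le> (\<integral>\<^sup>+ x. ennreal (?h x) \<partial>lebesgue)"
      using osc_osc_le_layer_majorants[OF D(4) _ \<rho> N] unfolding g_def
      by (intro nn_integral_mono) (auto simp: indicator_def intro: ennreal_leI)
    also have "\<dots> = ennreal (integral\<^sup>L lebesgue ?h)"
      using \<open>Inf (f ` D) \<le> Sup (f ` D)\<close> \<open>Inf (g ` D) \<le> Sup (g ` D)\<close> D(2) D_fin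
      by (intro nn_integral_eq_integral AE_I2 add_nonneg_nonneg layer_majorant_nonneg
          Bochner_Integration.integrable_add integrable_layer_majorant)
    also have "\<dots> \<le> ennreal (2 * (M * (q + measure lebesgue K / real N)))"
    proof (rule ennreal_leI)
      have "integral\<^sup>L lebesgue (layer_majorant F D N (r - \<rho>) (r + \<rho>)) \<le> M * (q + measure lebesgue K / real N)"
        if "bounded (F ` D)" "Sup (F ` D) - Inf (F ` D) = M" for F
        using integral_layer_majorant_le[OF K D(1-3) that(1) _ _ N, of "r - \<rho>" "r + \<rho>"] \<rho>
        unfolding that(2) q_def by simp
      from this[OF D(4) M_def[symmetric]] this[OF g]
      show "integral\<^sup>L lebesgue ?h \<le> 2 * (M * (q + measure lebesgue K / real N))"
        using integrable_layer_majorant[OF D(2) D_fin] by (simp add: Bochner_Integration.integral_add)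
    qed
    also have "\<dots> = ennreal (2 * M * q + 2 * M * measure lebesgue K / real N)"
      by (simp add: field_simps)
    finally show "(\<integral>\<^sup>+ x\<in>D. ennreal (osc \<rho> D (osc r D f) x) \<partial>lebesgue)
        \<le> ennreal (2 * M * q + 2 * M * measure lebesgue K / real N)" .
  qed
qed

lemma nn_integral_osc_le:
  fixes g :: "'a::euclidean_space \<Rightarrow> real"
  assumes "D \<in> sets lebesgue" "bounded (g ` D)" "0 < \<rho>"
  shows "(\<integral>\<^sup>+ x\<in>D. ennreal (osc \<rho> D g x) \<partial>lebesgue) \<le> ennreal (Sup (g ` D) - Inf (g ` D)) * emeasure lebesgue D"
proof -
  have "(\<integral>\<^sup>+ x\<in>D. ennreal (osc \<rho> D g x) \<partial>lebesgue)
      \<le> (\<integral>\<^sup>+ x. ennreal (Sup (g ` D) - Inf (g ` D)) * indicator D x \<partial>lebesgue)"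
    using osc_nonneg_le_range(2)[OF assms(2) _ assms(3)]
    by (intro nn_integral_mono) (auto simp: indicator_def intro: ennreal_leI)
  also have "\<dots> = ennreal (Sup (g ` D) - Inf (g ` D)) * emeasure lebesgue D"
    by (rule nn_integral_cmult_indicator[OF assms(1)])
  finally show ?thesis .
qed

lemma nn_integral_osc_osc_le_range:
  fixes f :: "'a::euclidean_space \<Rightarrow> real"
  assumes D: "D \<in> sets lebesgue" "D \<noteq> {}" "bounded (f ` D)" and \<rho>: "0 < \<rho>" and r: "0 < r"
  shows "(\<integral>\<^sup>+ x\<in>D. ennreal (osc \<rho> D (osc r D f) x) \<partial>lebesgue)
    \<le> ennreal (Sup (f ` D) - Inf (f ` D)) * emeasure lebesgue D"
proof -
  have osc_r: "osc r D f ` D \<subseteq> {0..Sup (f ` D) - Inf (f ` D)}"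
    using osc_nonneg_le_range[OF D(3) _ r] by auto
  then have "Sup (osc r D f ` D) - Inf (osc r D f ` D) \<le> Sup (f ` D) - Inf (f ` D)"
    using D(2) cSup_least[of "osc r D f ` D"] cInf_greatest[of "osc r D f ` D" 0]
    by (smt (verit) atLeastAtMost_iff image_is_empty subset_eq)
  then show ?thesis
    using nn_integral_osc_le[OF D(1) bounded_subset[OF bounded_closed_interval osc_r] \<rho>]
    by (meson ennreal_leI mult_right_mono order_trans zero_le)
qed

lemma one_minus_contraction_power_le:
  assumes "0 < \<rho>" "\<rho> \<le> r"
  shows "1 - ((r - \<rho>) / (r + \<rho>)) ^ n \<le> 2 * real n * \<rho> / r"
proof -
  define y where "y = 2 * \<rho> / (r + \<rho>)"
  have "(r - \<rho>) / (r + \<rho>) = 1 + - y" "-1 \<le> - y"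
    unfolding y_def using assms by (simp_all add: field_simps)
  then have "1 - real n * y \<le> ((r - \<rho>) / (r + \<rho>)) ^ n"
    using Bernoulli_inequality[of "- y" n] by simp
  moreover have "real n * y \<le> 2 * real n * \<rho> / r"
    unfolding y_def using assms by (simp add: field_simps mult_left_mono)
  ultimately show ?thesis
    by linarith
qed

lemma nn_integral_osc_osc_le:
  fixes f :: "'a::euclidean_space \<Rightarrow> real"
  assumes D: "D \<in> sets lebesgue" "D \<noteq> {}" "bounded (f ` D)"
    and \<rho>: "0 < \<rho>" and r: "0 < r" and \<alpha>: "0 < \<alpha>" "\<alpha> \<le> 1"
  shows "(\<integral>\<^sup>+ x\<in>D. ennreal (osc \<rho> D (osc r D f) x) \<partial>lebesgue)
    \<le> ennreal (2 * (Sup (f ` D) - Inf (f ` D)) * ((2 * real DIM('a) + 1) * \<rho> / r) powr \<alpha>)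
      * emeasure lebesgue (convex hull D)"
    (is "?I \<le> _")
proof -
  define M where "M = Sup (f ` D) - Inf (f ` D)"
  define t where "t = (2 * real DIM('a) + 1) * \<rho> / r"
  define K where "K = convex hull D"
  have K: "convex K" "K \<in> sets lebesgue" "D \<subseteq> K"
    unfolding K_def using convex_imp_sets_lebesgue[OF convex_convex_hull] hull_subset[of D convex] by auto
  have M: "0 \<le> M"
    unfolding M_def using osc_nonneg_le_range[OF D(3) _ r] D(2) by fastforce
  have "?I \<le> ennreal M * emeasure lebesgue D"
    unfolding M_def by (rule nn_integral_osc_osc_le_range[OF D \<rho> r])
  also have "\<dots> \<le> ennreal M * emeasure lebesgue K"
    using K by (intro mult_left_mono emeasure_mono) auto
  finally have I_le: "?I \<le> ennreal M * emeasure lebesgue K" .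
  have t: "0 < t"
    unfolding t_def using \<rho> r by simp
  consider (large) "1 \<le> t" | (infinite) "t < 1" "emeasure lebesgue K = \<infinity>"
    | (small) "t < 1" "emeasure lebesgue K < \<infinity>"
    using top.not_eq_extremum by force
  then have "?I \<le> ennreal (2 * M * t powr \<alpha>) * emeasure lebesgue K"
  proof cases
    case large
    have "1 \<le> t powr \<alpha>"
      using large \<alpha> by (simp add: ge_one_powr_ge_zero)
    then have "M * 1 \<le> M * t powr \<alpha>"
      using M by (rule mult_left_mono)
    then have "M \<le> 2 * M * t powr \<alpha>"
      using M by (simp add: mult.assoc)
    then show ?thesis
      using I_le by (meson ennreal_leI mult_right_mono order_trans zero_le)
  next
    case infinite
    show ?thesis
    proof (cases "M = 0")
      case True
      then show ?thesis
        using I_le by simp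
    next
      case False
      then show ?thesis
        using infinite(2) M t by (simp add: ennreal_mult_top)
    qed
  next
    case small
    have "(2 * real DIM('a) + 1) * \<rho> < r"
      using small r unfolding t_def by (simp add: divide_less_eq)
    moreover have "\<rho> \<le> (2 * real DIM('a) + 1) * \<rho>"
      using \<rho> by simp
    ultimately have "\<rho> < r"
      by linarith
    have "1 - ((r - \<rho>) / (r + \<rho>)) ^ DIM('a) \<le> 2 * real DIM('a) * \<rho> / r"
      using one_minus_contraction_power_le \<rho> \<open>\<rho> < r\<close> by simp
    also have "\<dots> \<le> t"
      unfolding t_def using \<rho> r by (simp add: divide_right_mono)
    also have "\<dots> \<le> t powr \<alpha>"
      using small t \<alpha> powr_mono'[of \<alpha> 1 t] by simp
    finally have "2 * M * ((1 - ((r - \<rho>) / (r + \<rho>)) ^ DIM('a)) * measure lebesgue K)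
        \<le> 2 * M * (t powr \<alpha> * measure lebesgue K)"
      using M by (intro mult_left_mono mult_right_mono) auto
    then have "?I \<le> ennreal (2 * M * t powr \<alpha> * measure lebesgue K)"
      using nn_integral_osc_osc_le_shell[OF K(1,2) small(2) K(3) D(1,2,3) \<rho> \<open>\<rho> < r\<close>]
      unfolding M_def
      by (simp add: ennreal_leI mult.assoc order_trans)
    then show ?thesis
      using small(2) emeasure_eq_ennreal_measure[of lebesgue K] by (simp add: ennreal_mult'')
  qed
  then show ?thesis
    unfolding M_def t_def K_def .
qed

theorem theorem1:
  fixes D :: "'a::euclidean_space set" and f :: "'a \<Rightarrow> real"
    and c r \<alpha> :: real
  assumes "c > 0"
    and "D \<in> sets lebesgue"
    and "bounded (f ` D)"
    and "r > 0"
    and "0 < \<alpha>" and "\<alpha> \<le> 1"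
  shows "gH_seminorm c \<alpha> D (osc r D f)
         \<le> ennreal (2 * (Sup (f ` D) - Inf (f ` D)))
           * (ennreal c * emeasure lebesgue (convex hull D))
           * ennreal (((2 * real DIM('a) + 1) / r) powr \<alpha>)"
proof (cases "D = {}")
  case True
  then show ?thesis
    by (simp add: gH_seminorm_def)
next
  case False
  let ?M = "Sup (f ` D) - Inf (f ` D)" and ?L = "((2 * real DIM('a) + 1) / r) powr \<alpha>"
  show ?thesis
    unfolding gH_seminorm_def
  proof (rule SUP_least)
    fix \<rho> :: real assume "\<rho> \<in> {0<..}"
    then have \<rho>: "0 < \<rho>" by simp
    have "((2 * real DIM('a) + 1) * \<rho> / r) powr \<alpha> = \<rho> powr \<alpha> * ?L"
      using \<rho> assms(4) by (simp add: powr_mult[symmetric] powr_divide[symmetric] field_simps)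
    then have "1 / \<rho> powr \<alpha> * (2 * ?M * ((2 * real DIM('a) + 1) * \<rho> / r) powr \<alpha>) = 2 * ?M * ?L"
      using \<rho> by simp
    then have scale: "ennreal (1 / \<rho> powr \<alpha>) * ennreal (2 * ?M * ((2 * real DIM('a) + 1) * \<rho> / r) powr \<alpha>)
        = ennreal (2 * ?M) * ennreal ?L"
      by (simp add: ennreal_mult'[symmetric] ennreal_mult''[symmetric])
    have "ennreal (1 / \<rho> powr \<alpha>) * (ennreal c * (\<integral>\<^sup>+ x\<in>D. ennreal (osc \<rho> D (osc r D f) x) \<partial>lebesgue))
        \<le> ennreal (1 / \<rho> powr \<alpha>) * (ennreal c
            * (ennreal (2 * ?M * ((2 * real DIM('a) + 1) * \<rho> / r) powr \<alpha>) * emeasure lebesgue (convex hull D)))"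
      using nn_integral_osc_osc_le[OF assms(2) False assms(3) \<rho> assms(4-6)]
      by (intro mult_left_mono) auto
    also have "\<dots> = ennreal (1 / \<rho> powr \<alpha>) * ennreal (2 * ?M * ((2 * real DIM('a) + 1) * \<rho> / r) powr \<alpha>)
        * (ennreal c * emeasure lebesgue (convex hull D))"
      by (simp only: ac_simps)
    also have "\<dots> = ennreal (2 * ?M) * (ennreal c * emeasure lebesgue (convex hull D)) * ennreal ?L"
      unfolding scale by (simp only: ac_simps)
    finally show "ennreal (1 / \<rho> powr \<alpha>) * (ennreal c * (\<integral>\<^sup>+ x\<in>D. ennreal (osc \<rho> D (osc r D f) x) \<partial>lebesgue))
        \<le> ennreal (2 * ?M) * (ennreal c * emeasure lebesgue (convex hull D)) * ennreal ?L" .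
  qed
qed

end
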